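(* For every odd integer $\Delta \ge 1$ there is a local algorithm that, on every graph $\mathcal{G}=(V,E)$ without isolated nodes, of maximum degree at most $\Delta$, equipped with a port numbering and an orientation (and no colouring, no identifiers), outputs a dominating set $D$ with $|D| \le \Delta\,|D^*|$, where $D^*$ is a minimum dominating set of $\mathcal{G}$.
   Context: Model: a graph $\mathcal{G}=(V,E)$ without isolated nodes is a distributed system; every node runs the same deterministic algorithm. Communication is synchronous: in each round every node receives messages from its neighbours, performs local computation, and sends messages to its neighbours. Each node knows its degree and the global degree bound $\Delta$. A local algorithm is one that terminates after $T$ rounds, where $T$ may depend on $\Delta$ but not on the number of nodes; its output at a node is whether the node belongs to the solution. A port numbering means each node has a fixed ordering of its incident edges, known to it; nodes have no identifiers. An orientation chooses for each edge $\{u,v\}$ exactly one direction, and each node knows which of its incident edges are outgoing and which are incoming. *)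

theory Defs
  imports Main
begin

text \<open>Port numbering pn: node v reaches its neighbours through ports 0..<deg v, pn v i is
  the neighbour at port i. Orientation ori: ori u v means edge {u,v} is directed u to v.\<close>

definition degree :: "('v \<Rightarrow> 'v \<Rightarrow> bool) \<Rightarrow> 'v \<Rightarrow> nat" where
  "degree adj v = card {u. adj v u}"

definition valid_instance ::
  "'v set \<Rightarrow> ('v \<Rightarrow> 'v \<Rightarrow> bool) \<Rightarrow> ('v \<Rightarrow> nat \<Rightarrow> 'v) \<Rightarrow> ('v \<Rightarrow> 'v \<Rightarrow> bool) \<Rightarrow> bool" where
  "valid_instance V adj pn ori \<longleftrightarrow>
     finite V \<and>
     (\<forall>u v. adj u v \<longrightarrow> u \<in> V \<and> v \<in> V \<and> u \<noteq> v \<and> adj v u) \<and>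
     (\<forall>v\<in>V. bij_betw (pn v) {..<degree adj v} {u. adj v u}) \<and>
     (\<forall>u v. adj u v \<longrightarrow> (ori u v \<longleftrightarrow> \<not> ori v u))"

definition port_of :: "('v \<Rightarrow> 'v \<Rightarrow> bool) \<Rightarrow> ('v \<Rightarrow> nat \<Rightarrow> 'v) \<Rightarrow> 'v \<Rightarrow> 'v \<Rightarrow> nat" where
  "port_of adj pn u v = (THE j. j < degree adj u \<and> pn u j = v)"

text \<open>A deterministic synchronous anonymous algorithm running for a fixed number of rounds.
  start receives, for each port in order, whether the edge is outgoing (the list length is
  the degree). In each round a node sends send s i on port i, and then updates its state
  from the list of messages received, indexed by its own port numbers.\<close>
record ('s, 'm) local_alg =
  rounds :: nat
  start :: "bool list \<Rightarrow> 's"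
  send :: "'s \<Rightarrow> nat \<Rightarrow> 'm"
  step :: "'s \<Rightarrow> 'm list \<Rightarrow> 's"
  out :: "'s \<Rightarrow> bool"

primrec run :: "('s, 'm) local_alg \<Rightarrow> ('v \<Rightarrow> 'v \<Rightarrow> bool) \<Rightarrow> ('v \<Rightarrow> nat \<Rightarrow> 'v)
    \<Rightarrow> ('v \<Rightarrow> 'v \<Rightarrow> bool) \<Rightarrow> nat \<Rightarrow> 'v \<Rightarrow> 's" where
  "run A adj pn ori 0 v = start A (map (\<lambda>i. ori v (pn v i)) [0..<degree adj v])"
| "run A adj pn ori (Suc t) v =
     step A (run A adj pn ori t v)
       (map (\<lambda>j. send A (run A adj pn ori t (pn v j)) (port_of adj pn (pn v j) v))
            [0..<degree adj v])"

definition alg_output :: "('s, 'm) local_alg \<Rightarrow> 'v set \<Rightarrow> ('v \<Rightarrow> 'v \<Rightarrow> bool)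
    \<Rightarrow> ('v \<Rightarrow> nat \<Rightarrow> 'v) \<Rightarrow> ('v \<Rightarrow> 'v \<Rightarrow> bool) \<Rightarrow> 'v set" where
  "alg_output A V adj pn ori = {v \<in> V. out A (run A adj pn ori (rounds A) v)}"

definition dominating_set :: "'v set \<Rightarrow> ('v \<Rightarrow> 'v \<Rightarrow> bool) \<Rightarrow> 'v set \<Rightarrow> bool" where
  "dominating_set V adj D \<longleftrightarrow> D \<subseteq> V \<and> (\<forall>v\<in>V. v \<in> D \<or> (\<exists>u\<in>D. adj u v))"

definition min_dominating_set :: "'v set \<Rightarrow> ('v \<Rightarrow> 'v \<Rightarrow> bool) \<Rightarrow> 'v set \<Rightarrow> bool" where
  "min_dominating_set V adj D \<longleftrightarrow> dominating_set V adj D \<and>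
     (\<forall>D'. dominating_set V adj D' \<longrightarrow> card D \<le> card D')"

end

theory Submission imports Defs "HOL-Library.Nat_Bijection" begin

(* Call a node full if its degree is Delta, inner if it and all its neighbours are full,
   in-heavy / out-heavy if more than half of its edges are incoming / outgoing; since Delta
   is odd, every full node is exactly one of the two.  The algorithm REMOVES a full node v
   if v is not inner, or if v is out-heavy, inner and has an outgoing edge to an inner
   in-heavy node; all other nodes form the output D = V - R.

   A weighting (Delta on those nodes, Delta + 1 elsewhere)
       whose total is at most Delta (Delta + 1) |D*| for every dominating set D* then
       yields |D| <= Delta |D*|.
   (3) The rule needs only the radius-2 view of a node, so a two-round full-information
       algorithm computes it; we show its output is exactly V - R. *)

section \<open>Counting edges into in-heavy sets\<close>

text \<open>If every node of a finite set S has more incoming than outgoing edges, then S is no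
  larger than the number of edges entering S from outside: inside S the edges cancel out,
  so each node's surplus must be paid by an external edge.\<close>

lemma card_le_entering_edges:
  fixes S :: "'v set" and adj dir :: "'v \<Rightarrow> 'v \<Rightarrow> bool"
  assumes fS: "finite S" and fN: "\<And>v. v \<in> S \<Longrightarrow> finite {u. adj v u}"
    and sym: "\<And>u v. adj u v \<Longrightarrow> adj v u"
    and heavy: "\<And>v. v \<in> S \<Longrightarrow> card {u. adj v u \<and> dir v u} < card {u. adj v u \<and> dir u v}"
  shows "card S \<le> card {(v,u). v \<in> S \<and> u \<notin> S \<and> adj v u \<and> dir u v}"
proof -
  define In where "In = Sigma S (\<lambda>v. {u. adj v u \<and> dir u v})"
  define Out where "Out = Sigma S (\<lambda>v. {u. adj v u \<and> dir v u})"
  define Inside where "Inside = {(v,u). v \<in> S \<and> u \<in> S \<and> adj v u \<and> dir u v}"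
  define Entering where "Entering = {(v,u). v \<in> S \<and> u \<notin> S \<and> adj v u \<and> dir u v}"
  have fin_in: "\<And>v. v \<in> S \<Longrightarrow> finite {u. adj v u \<and> dir u v}"
    and fin_out: "\<And>v. v \<in> S \<Longrightarrow> finite {u. adj v u \<and> dir v u}"
    using fN by (auto elim: rev_finite_subset)
  have "(\<Sum>v\<in>S. card {u. adj v u \<and> dir v u} + 1) \<le> (\<Sum>v\<in>S. card {u. adj v u \<and> dir u v})"
    by (rule sum_mono) (simp add: heavy Suc_leI)
  moreover have "(\<Sum>v\<in>S. card {u. adj v u \<and> dir v u} + 1)
      = (\<Sum>v\<in>S. card {u. adj v u \<and> dir v u}) + card S"
    by (simp only: sum.distrib card_eq_sum)
  ultimately have surplus: "card Out + card S \<le> card In"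
    unfolding In_def Out_def using fS fin_in fin_out by simp
  have "In = Inside \<union> Entering" "Inside \<inter> Entering = {}"
    unfolding In_def Inside_def Entering_def by auto
  moreover have "finite In" unfolding In_def using fS fin_in by auto
  ultimately have split: "card In = card Inside + card Entering"
    by (simp add: card_Un_disjoint)
  text \<open>An inside edge entering v from u is an edge leaving u, so reversing is injective.\<close>
  have "card Inside \<le> card Out"
  proof (rule card_inj_on_le[where f = "\<lambda>(v,u). (u,v)"])
    show "inj_on (\<lambda>(v, u). (u, v)) Inside" by (auto simp: inj_on_def)
    show "(\<lambda>(v, u). (u, v)) ` Inside \<subseteq> Out" unfolding Inside_def Out_def using sym by auto
    show "finite Out" unfolding Out_def using fS fin_out by auto
  qed
  then show ?thesis using surplus split unfolding Entering_def by linarith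
qed

section \<open>The removal rule on a bounded-degree oriented graph\<close>

locale oriented_graph =
  fixes V :: "'v set" and adj ori :: "'v \<Rightarrow> 'v \<Rightarrow> bool" and \<Delta> :: nat
  assumes finV: "finite V"
    and adjV: "\<And>u v. adj u v \<Longrightarrow> u \<in> V \<and> v \<in> V"
    and irrefl: "\<And>u v. adj u v \<Longrightarrow> u \<noteq> v"
    and sym: "\<And>u v. adj u v \<Longrightarrow> adj v u"
    and orient: "\<And>u v. adj u v \<Longrightarrow> (ori u v \<longleftrightarrow> \<not> ori v u)"
    and deg_bound: "\<And>v. v \<in> V \<Longrightarrow> degree adj v \<le> \<Delta>"
    and odd_\<Delta>: "odd \<Delta>"
begin

definition outdeg :: "'v \<Rightarrow> nat" where "outdeg v = card {u. adj v u \<and> ori v u}"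
definition indeg :: "'v \<Rightarrow> nat" where "indeg v = card {u. adj v u \<and> ori u v}"

definition full :: "'v \<Rightarrow> bool" where "full v \<longleftrightarrow> degree adj v = \<Delta>"
definition inner :: "'v \<Rightarrow> bool" where "inner v \<longleftrightarrow> full v \<and> (\<forall>u. adj v u \<longrightarrow> full u)"
definition in_heavy :: "'v \<Rightarrow> bool" where "in_heavy v \<longleftrightarrow> 2 * outdeg v < degree adj v"
definition out_heavy :: "'v \<Rightarrow> bool" where "out_heavy v \<longleftrightarrow> degree adj v < 2 * outdeg v"

definition removed :: "'v set" where
  "removed = {v \<in> V. full v \<and>
     (\<not> inner v \<or> (out_heavy v \<and> (\<exists>u. adj v u \<and> ori v u \<and> inner u \<and> in_heavy u)))}"

lemma finite_nbrs: "finite {u. adj v u}"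
  using finV by (rule rev_finite_subset) (use adjV in blast)

lemma outdeg_plus_indeg: "outdeg v + indeg v = degree adj v"
proof -
  let ?Out = "{u. adj v u \<and> ori v u}" and ?In = "{u. adj v u \<and> ori u v}"
  have split: "{u. adj v u} = ?Out \<union> ?In" "?Out \<inter> ?In = {}"
    using orient[of v] by blast+
  have "finite ?Out" "finite ?In"
    by (rule finite_subset[OF _ finite_nbrs[of v]], blast)+
  then have "card (?Out \<union> ?In) = outdeg v + indeg v"
    using split(2) unfolding outdeg_def indeg_def by (rule card_Un_disjoint)
  moreover have "degree adj v = card (?Out \<union> ?In)"
    unfolding degree_def using split(1) by (rule arg_cong)
  ultimately show ?thesis by simp
qed

lemma in_heavy_iff: "in_heavy v \<longleftrightarrow> outdeg v < indeg v"
  using outdeg_plus_indeg[of v] unfolding in_heavy_def by linarith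

lemma out_heavy_iff: "out_heavy v \<longleftrightarrow> indeg v < outdeg v"
  using outdeg_plus_indeg[of v] unfolding out_heavy_def by linarith

text \<open>Oddness of \<Delta> is used exactly here: a full node cannot be balanced.\<close>
lemma full_heavy: "full v \<Longrightarrow> in_heavy v \<or> out_heavy v"
proof -
  assume "full v"
  then have "2 * outdeg v \<noteq> degree adj v"
    using odd_\<Delta> unfolding full_def by (metis dvd_triv_left)
  then show ?thesis unfolding in_heavy_def out_heavy_def by linarith
qed

lemma not_in_and_out_heavy: "\<not> (in_heavy v \<and> out_heavy v)"
  unfolding in_heavy_def out_heavy_def by linarith

lemma inner_full: "inner v \<Longrightarrow> full v" unfolding inner_def by simp

lemma removed_subset: "removed \<subseteq> V" unfolding removed_def by auto

text \<open>Correctness: a non-inner removed node has a non-full (hence kept) neighbour, and the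
  other removed nodes point to an inner in-heavy node, which is never removed.\<close>
lemma kept_dominating: "dominating_set V adj (V - removed)"
  unfolding dominating_set_def
proof (intro conjI ballI)
  fix v assume v: "v \<in> V"
  show "v \<in> V - removed \<or> (\<exists>u\<in>V - removed. adj u v)"
  proof (cases "v \<in> removed")
    case True
    then have "\<exists>u. adj v u \<and> u \<notin> removed"
      using not_in_and_out_heavy unfolding removed_def inner_def by blast
    then show ?thesis using adjV sym by blast
  qed (use v in simp)
qed simp

definition edges_between :: "'v set \<Rightarrow> 'v set \<Rightarrow> ('v \<times> 'v) set" where
  "edges_between A B = {(a,b). a \<in> A \<and> b \<in> B \<and> adj a b}"

lemma finite_edges_between: "finite (edges_between A B)"
  by (rule finite_subset[of _ "V \<times> V"]) (use finV adjV in \<open>auto simp: edges_between_def\<close>)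

lemma card_edges_between_Un:
  "B \<inter> C = {} \<Longrightarrow>
    card (edges_between A (B \<union> C)) = card (edges_between A B) + card (edges_between A C)"
proof -
  assume "B \<inter> C = {}"
  then have "edges_between A (B \<union> C) = edges_between A B \<union> edges_between A C"
    "edges_between A B \<inter> edges_between A C = {}"
    unfolding edges_between_def by auto
  then show ?thesis by (simp add: card_Un_disjoint finite_edges_between)
qed

lemma card_edges_between_le: "A \<subseteq> V \<Longrightarrow> card (edges_between A B) \<le> \<Delta> * card A"
proof -
  assume AV: "A \<subseteq> V"
  have fA: "finite A" using finV AV by (rule rev_finite_subset)
  have "card (edges_between A B) \<le> card (Sigma A (\<lambda>a. {u. adj a u}))"
    by (rule card_mono) (use fA finite_nbrs in \<open>auto simp: edges_between_def\<close>)
  also have "\<dots> = (\<Sum>a\<in>A. degree adj a)" unfolding degree_def using fA finite_nbrs by simp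
  also have "\<dots> \<le> (\<Sum>a\<in>A. \<Delta>)" by (rule sum_mono) (use deg_bound AV in auto)
  finally show ?thesis by (simp add: mult.commute)
qed

text \<open>The direction is a parameter so
  that it applies to out-heavy sets by reversing the orientation.\<close>
lemma card_le_edges_from:
  fixes dir :: "'v \<Rightarrow> 'v \<Rightarrow> bool"
  assumes SV: "S \<subseteq> V"
    and heavy: "\<And>v. v \<in> S \<Longrightarrow> card {u. adj v u \<and> dir v u} < card {u. adj v u \<and> dir u v}"
    and source: "\<And>v u. v \<in> S \<Longrightarrow> u \<notin> S \<Longrightarrow> adj v u \<Longrightarrow> dir u v \<Longrightarrow> u \<in> A"
  shows "card S \<le> card (edges_between A S)"
proof -
  let ?X = "{(v,u). v \<in> S \<and> u \<notin> S \<and> adj v u \<and> dir u v}"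
  have "card S \<le> card ?X"
    using finite_subset[OF SV finV] finite_nbrs sym heavy by (rule card_le_entering_edges)
  also have "\<dots> \<le> card (edges_between A S)"
  proof (rule card_inj_on_le[where f = "\<lambda>(v,u). (u,v)"])
    show "inj_on (\<lambda>(v, u). (u, v)) ?X" by (auto simp: inj_on_def)
    show "(\<lambda>(v, u). (u, v)) ` ?X \<subseteq> edges_between A S"
      using source sym unfolding edges_between_def by auto
  qed (rule finite_edges_between)
  finally show ?thesis .
qed

definition border :: "'v set" where "border = {v \<in> V. \<not> full v \<and> (\<exists>u. adj v u \<and> full u)}"
definition inner_in :: "'v set" where "inner_in = {v \<in> V. inner v \<and> in_heavy v}"
definition inner_out_kept :: "'v set" where
  "inner_out_kept = {v \<in> V. inner v \<and> \<not> in_heavy v \<and> v \<notin> removed}"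

text \<open>A border node has a full neighbour that is not inner, hence removed.\<close>
lemma card_border: "card border \<le> card (edges_between removed border)"
proof -
  have "border \<subseteq> snd ` edges_between removed border"
  proof
    fix v assume v: "v \<in> border"
    then obtain u where u: "adj v u" "full u" and "\<not> full v" unfolding border_def by auto
    then have "u \<in> removed" using adjV sym unfolding removed_def inner_def by blast
    then have "(u,v) \<in> edges_between removed border"
      using v sym[OF u(1)] unfolding edges_between_def by auto
    then show "v \<in> snd ` edges_between removed border" by force
  qed
  then show ?thesis
    by (meson card_image_le card_mono finite_edges_between finite_imageI order_trans)
qed

text \<open>An edge entering an inner in-heavy node comes from a full node which is either not
  inner or out-heavy, inner and pointing to an inner in-heavy node: removed either way.\<close>
lemma card_inner_in: "card inner_in \<le> card (edges_between removed inner_in)"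
proof (rule card_le_edges_from[where dir = ori])
  fix v u assume v: "v \<in> inner_in" and u: "u \<notin> inner_in" "adj v u" "ori u v"
  have uV: "u \<in> V" and full_u: "full u" using v u(2) adjV unfolding inner_in_def inner_def by auto
  show "u \<in> removed"
  proof (cases "inner u")
    case True
    then have "out_heavy u" using u(1) uV full_heavy[OF full_u] unfolding inner_in_def by auto
    then show ?thesis using True uV full_u sym[OF u(2)] u(3) v unfolding removed_def inner_in_def
      by blast
  qed (use uV full_u in \<open>simp add: removed_def\<close>)
qed (auto simp: inner_in_def in_heavy_iff outdeg_def indeg_def)

text \<open>Dually, an edge leaving a kept inner out-heavy node v goes to a removed node: its head
  is full, and if it were inner and in-heavy then v itself would have been removed.\<close>
lemma card_inner_out_kept:
  "card inner_out_kept \<le> card (edges_between removed inner_out_kept)"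
proof (rule card_le_edges_from[where dir = "\<lambda>a b. ori b a"])
  fix v assume "v \<in> inner_out_kept"
  then have "out_heavy v" using full_heavy inner_full unfolding inner_out_kept_def by blast
  then show "card {u. adj v u \<and> ori u v} < card {u. adj v u \<and> ori v u}"
    unfolding out_heavy_iff outdeg_def indeg_def .
next
  fix v u assume v: "v \<in> inner_out_kept" and u: "u \<notin> inner_out_kept" "adj v u" "ori v u"
  have uV: "u \<in> V" and full_u: "full u"
    using v u(2) adjV unfolding inner_out_kept_def inner_def by auto
  have v_kept: "v \<in> V" "inner v" "\<not> in_heavy v" "v \<notin> removed"
    using v unfolding inner_out_kept_def by auto
  then have "out_heavy v" using full_heavy inner_full by blast
  then have "\<not> (inner u \<and> in_heavy u)"
    using v_kept inner_full[of v] u(2,3) unfolding removed_def by blast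
  then have "inner u \<Longrightarrow> u \<in> removed" using u(1) uV unfolding inner_out_kept_def by blast
  moreover have "\<not> inner u \<Longrightarrow> u \<in> removed" using uV full_u unfolding removed_def by blast
  ultimately show "u \<in> removed" by blast
qed (auto simp: inner_out_kept_def)

text \<open>The three sets are disjoint, so together they are paid for by at most \<Delta> |R| edges.\<close>
lemma card_kept_near_full:
  "card border + card inner_in + card inner_out_kept \<le> \<Delta> * card removed"
proof -
  have disj: "border \<inter> inner_in = {}" "(border \<union> inner_in) \<inter> inner_out_kept = {}"
    unfolding border_def inner_in_def inner_out_kept_def inner_def by auto
  have "card border + card inner_in + card inner_out_kept
      \<le> card (edges_between removed border) + card (edges_between removed inner_in)
        + card (edges_between removed inner_out_kept)"
    using card_border card_inner_in card_inner_out_kept by linarith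
  also have "\<dots> = card (edges_between removed (border \<union> inner_in \<union> inner_out_kept))"
    using disj by (simp add: card_edges_between_Un)
  also have "\<dots> \<le> \<Delta> * card removed" by (rule card_edges_between_le[OF removed_subset])
  finally show ?thesis .
qed

definition near_full :: "'v set" where
  "near_full = {v \<in> V. full v \<or> (\<exists>u. adj v u \<and> full u)}"

lemma card_near_full: "card near_full \<le> (\<Delta> + 1) * card removed"
proof -
  have "near_full \<subseteq> removed \<union> border \<union> inner_in \<union> inner_out_kept"
    unfolding near_full_def removed_def border_def inner_in_def inner_out_kept_def by auto
  then have "card near_full \<le> card (removed \<union> border \<union> inner_in \<union> inner_out_kept)"
    using finV removed_subset
    by (intro card_mono) (auto simp: border_def inner_in_def inner_out_kept_def
        intro: rev_finite_subset)
  also have "\<dots> \<le> card removed + card border + card inner_in + card inner_out_kept"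
    by (meson card_Un_le add_le_mono order_trans le_refl)
  finally show ?thesis using card_kept_near_full by simp
qed

text \<open>Weight \<Delta> near full nodes and \<Delta> + 1 elsewhere: the closed neighbourhood of any node
  then weighs at most \<Delta> (\<Delta> + 1).\<close>
definition weight :: "'v \<Rightarrow> nat" where
  "weight v = (if v \<in> near_full then \<Delta> else \<Delta> + 1)"

definition closed_nbhd :: "'v \<Rightarrow> 'v set" where
  "closed_nbhd s = {v \<in> V. s = v \<or> adj s v}"

lemma total_weight: "(\<Sum>v\<in>V. weight v) + card near_full = (\<Delta> + 1) * card V"
proof -
  have sub: "near_full \<subseteq> V" unfolding near_full_def by auto
  have "(\<Sum>v\<in>V. weight v) + card near_full
      = (\<Sum>v\<in>V. weight v) + (\<Sum>v\<in>V. if v \<in> near_full then 1 else 0)"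
    using sum.inter_restrict[OF finV, of "\<lambda>_. 1::nat" near_full] sub
    by (simp add: Int_absorb1)
  also have "\<dots> = (\<Sum>v\<in>V. \<Delta> + 1)"
    unfolding sum.distrib[symmetric] by (rule sum.cong) (auto simp: weight_def)
  finally show ?thesis by (simp add: mult.commute)
qed

lemma closed_nbhd_weight:
  assumes sV: "s \<in> V" shows "(\<Sum>v\<in>closed_nbhd s. weight v) \<le> \<Delta> * (\<Delta> + 1)"
proof -
  have "closed_nbhd s = insert s {u. adj s u}" "s \<notin> {u. adj s u}"
    using sV adjV irrefl unfolding closed_nbhd_def by auto
  then have card_N: "card (closed_nbhd s) = degree adj s + 1"
    unfolding degree_def using finite_nbrs by simp
  show ?thesis
  proof (cases "full s")
    case True
    then have "\<forall>v\<in>closed_nbhd s. weight v = \<Delta>"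
      using sym unfolding closed_nbhd_def weight_def near_full_def by auto
    then show ?thesis using card_N True unfolding full_def by simp
  next
    case False
    then have "card (closed_nbhd s) \<le> \<Delta>" using card_N deg_bound[OF sV] unfolding full_def by simp
    moreover have "(\<Sum>v\<in>closed_nbhd s. weight v) \<le> card (closed_nbhd s) * (\<Delta> + 1)"
      using sum_bounded_above[of "closed_nbhd s" weight "\<Delta> + 1"] by (simp add: weight_def)
    ultimately show ?thesis by (meson mult_le_mono1 order_trans)
  qed
qed

text \<open>Double counting: every node lies in the closed neighbourhood of some dominator.\<close>
lemma weight_le_dominating:
  assumes dom: "dominating_set V adj D"
  shows "(\<Sum>v\<in>V. weight v) \<le> \<Delta> * (\<Delta> + 1) * card D"
proof -
  have DV: "D \<subseteq> V" using dom unfolding dominating_set_def by auto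
  have finD: "finite D" using finV DV by (rule rev_finite_subset)
  have "(\<Sum>v\<in>V. weight v) \<le> (\<Sum>v\<in>V. \<Sum>s\<in>{s \<in> D. s = v \<or> adj s v}. weight v)"
  proof (rule sum_mono)
    fix v assume "v \<in> V"
    then have "{s \<in> D. s = v \<or> adj s v} \<noteq> {}" using dom unfolding dominating_set_def by auto
    then have "card {s \<in> D. s = v \<or> adj s v} \<ge> 1" using finD by (simp add: Suc_le_eq card_gt_0_iff)
    then show "weight v \<le> (\<Sum>s\<in>{s \<in> D. s = v \<or> adj s v}. weight v)" by simp
  qed
  also have "\<dots> = (\<Sum>s\<in>D. \<Sum>v\<in>closed_nbhd s. weight v)"
    unfolding closed_nbhd_def by (rule sum.swap_restrict[OF finV finD])
  also have "\<dots> \<le> (\<Sum>s\<in>D. \<Delta> * (\<Delta> + 1))"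
    by (rule sum_mono) (use DV closed_nbhd_weight in blast)
  finally show ?thesis by (simp add: mult.commute)
qed

text \<open>Approximation ratio: (\<Delta> + 1) |V - R| \<le> total weight \<le> \<Delta> (\<Delta> + 1) |D|.\<close>
lemma card_kept_le:
  assumes dom: "dominating_set V adj D"
  shows "card (V - removed) \<le> \<Delta> * card D"
proof -
  have "card V = card (V - removed) + card removed"
    using finV removed_subset by (metis card_Diff_subset card_mono le_add_diff_inverse2 finite_subset)
  then have "(\<Delta> + 1) * card (V - removed) \<le> (\<Sum>v\<in>V. weight v)"
    using total_weight card_near_full by (simp add: algebra_simps)
  also have "\<dots> \<le> (\<Delta> + 1) * (\<Delta> * card D)"
    using weight_le_dominating[OF dom] by (simp add: algebra_simps)
  finally show ?thesis by (rule mult_left_le_imp_le) simp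
qed

end

section \<open>A two-round algorithm computing the rule\<close>

text \<open>The initial state encodes the list of orientation bits
  of the ports (1 = outgoing); every round a node sends its whole state and pairs it with
  the list of received states.  After two rounds a node knows its radius-2 view, which is
  all the removal rule depends on; the functions below read the rule off that view.\<close>

definition bit :: "bool \<Rightarrow> nat" where "bit b = (if b then 1 else 0)"

definition view_degree :: "nat \<Rightarrow> nat" where "view_degree s0 = length (list_decode s0)"
definition view_outdeg :: "nat \<Rightarrow> nat" where
  "view_outdeg s0 = length (filter (\<lambda>x. x = 1) (list_decode s0))"
definition view_full :: "nat \<Rightarrow> nat \<Rightarrow> bool" where "view_full D s0 \<longleftrightarrow> view_degree s0 = D"
definition view_in_heavy :: "nat \<Rightarrow> bool" where
  "view_in_heavy s0 \<longleftrightarrow> 2 * view_outdeg s0 < view_degree s0"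
definition view_out_heavy :: "nat \<Rightarrow> bool" where
  "view_out_heavy s0 \<longleftrightarrow> view_degree s0 < 2 * view_outdeg s0"
definition view_inner :: "nat \<Rightarrow> nat \<Rightarrow> bool" where
  "view_inner D s1 \<longleftrightarrow> view_full D (fst (prod_decode s1)) \<and>
     (\<forall>x\<in>set (list_decode (snd (prod_decode s1))). view_full D x)"

definition view_keep :: "nat \<Rightarrow> nat \<Rightarrow> bool" where
  "view_keep D s2 = (let s1 = fst (prod_decode s2); ns = list_decode (snd (prod_decode s2));
      s0 = fst (prod_decode s1); bits = list_decode s0 in
    \<not> (view_full D s0 \<and> (\<not> view_inner D s1 \<or> (view_out_heavy s0 \<and>
      (\<exists>j<length bits. bits ! j = 1 \<and> view_inner D (ns ! j)
         \<and> view_in_heavy (fst (prod_decode (ns ! j))))))))"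

definition gather_alg :: "nat \<Rightarrow> (nat, nat) local_alg" where
  "gather_alg D = \<lparr>rounds = 2, start = (\<lambda>bs. list_encode (map bit bs)), send = (\<lambda>s i. s),
     step = (\<lambda>s ms. prod_encode (s, list_encode ms)), out = view_keep D\<rparr>"

lemma decode_run_0:
  "list_decode (run (gather_alg D) adj pn ori 0 v) = map (\<lambda>i. bit (ori v (pn v i))) [0..<degree adj v]"
  by (simp add: gather_alg_def)

lemma decode_run_Suc:
  "prod_decode (run (gather_alg D) adj pn ori (Suc t) v) = (run (gather_alg D) adj pn ori t v,
    list_encode (map (\<lambda>j. run (gather_alg D) adj pn ori t (pn v j)) [0..<degree adj v]))"
  by (subst run.simps(2)) (simp add: gather_alg_def del: run.simps)

declare run.simps[simp del]

locale port_numbered_graph = oriented_graph V adj ori \<Delta> for V :: "'v set" and adj ori \<Delta> +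
  fixes pn :: "'v \<Rightarrow> nat \<Rightarrow> 'v"
  assumes ports: "\<And>v. v \<in> V \<Longrightarrow> bij_betw (pn v) {..<degree adj v} {u. adj v u}"
begin

abbreviation "state t \<equiv> run (gather_alg \<Delta>) adj pn ori t"

lemma port_image: "v \<in> V \<Longrightarrow> pn v ` {..<degree adj v} = {u. adj v u}"
  using ports by (simp add: bij_betw_def)

lemma ex_port:
  assumes vV: "v \<in> V" shows "(\<exists>j<degree adj v. P (pn v j)) \<longleftrightarrow> (\<exists>u. adj v u \<and> P u)"
proof
  assume "\<exists>j<degree adj v. P (pn v j)"
  then obtain j where "j < degree adj v" "P (pn v j)" by blast
  moreover from this have "adj v (pn v j)" using port_image[OF vV] by blast
  ultimately show "\<exists>u. adj v u \<and> P u" by blast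
next
  assume "\<exists>u. adj v u \<and> P u"
  then obtain u where u: "adj v u" "P u" by blast
  then obtain j where "j < degree adj v" "u = pn v j"
    using port_image[OF vV] by (metis imageE lessThan_iff mem_Collect_eq)
  then show "\<exists>j<degree adj v. P (pn v j)" using u by blast
qed

lemma all_port: "v \<in> V \<Longrightarrow> (\<forall>j<degree adj v. P (pn v j)) \<longleftrightarrow> (\<forall>u. adj v u \<longrightarrow> P u)"
  using ex_port[of v "\<lambda>u. \<not> P u"] by blast

lemma card_port:
  assumes vV: "v \<in> V"
  shows "card {i. i < degree adj v \<and> P (pn v i)} = card {u. adj v u \<and> P u}"
proof -
  have "inj_on (pn v) {i. i < degree adj v \<and> P (pn v i)}"
    using ports[OF vV] unfolding bij_betw_def by (rule inj_on_subset[OF conjunct1]) auto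
  moreover have "pn v ` {i. i < degree adj v \<and> P (pn v i)} = {u. adj v u \<and> P u}"
  proof (rule set_eqI)
    fix u
    show "u \<in> pn v ` {i. i < degree adj v \<and> P (pn v i)} \<longleftrightarrow> u \<in> {u. adj v u \<and> P u}"
      using ex_port[OF vV, of "\<lambda>x. x = u \<and> P x"] by auto
  qed
  ultimately show ?thesis by (metis card_image)
qed

lemma view_degree_state_0: "view_degree (state 0 v) = degree adj v"
  unfolding view_degree_def decode_run_0 by simp

lemma view_outdeg_state_0: "v \<in> V \<Longrightarrow> view_outdeg (state 0 v) = outdeg v"
proof -
  assume vV: "v \<in> V"
  have "view_outdeg (state 0 v) = card {i. i < degree adj v \<and> ori v (pn v i)}"
    unfolding view_outdeg_def decode_run_0 length_filter_conv_card
    by (rule arg_cong[where f = card]) (auto simp: bit_def split: if_splits)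
  then show ?thesis using card_port[OF vV] unfolding outdeg_def by simp
qed

lemma view_full_state_0: "view_full \<Delta> (state 0 v) \<longleftrightarrow> full v"
  unfolding view_full_def full_def view_degree_state_0 ..

lemma view_in_heavy_state_0: "v \<in> V \<Longrightarrow> view_in_heavy (state 0 v) \<longleftrightarrow> in_heavy v"
  unfolding view_in_heavy_def in_heavy_def view_degree_state_0 by (simp only: view_outdeg_state_0)

lemma view_out_heavy_state_0: "v \<in> V \<Longrightarrow> view_out_heavy (state 0 v) \<longleftrightarrow> out_heavy v"
  unfolding view_out_heavy_def out_heavy_def view_degree_state_0 by (simp only: view_outdeg_state_0)

lemma fst_decode_state_1: "fst (prod_decode (state 1 v)) = state 0 v"
  unfolding One_nat_def decode_run_Suc by simp

lemma view_inner_state_1: assumes vV: "v \<in> V" shows "view_inner \<Delta> (state 1 v) \<longleftrightarrow> inner v"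
proof -
  have "(\<forall>x\<in>set (map (\<lambda>j. state 0 (pn v j)) [0..<degree adj v]). view_full \<Delta> x)
      \<longleftrightarrow> (\<forall>j<degree adj v. full (pn v j))"
    by (auto simp: view_full_state_0)
  then have "view_inner \<Delta> (state 1 v) \<longleftrightarrow> full v \<and> (\<forall>j<degree adj v. full (pn v j))"
    unfolding view_inner_def One_nat_def decode_run_Suc fst_conv snd_conv list_encode_inverse
      view_full_state_0 by simp
  also have "\<dots> \<longleftrightarrow> inner v" unfolding inner_def using all_port[OF vV, of full] by simp
  finally show ?thesis .
qed

lemma view_keep_state_2:
  assumes vV: "v \<in> V" shows "view_keep \<Delta> (state 2 v) \<longleftrightarrow> v \<notin> removed"
proof -
  define nbr_states where "nbr_states = map (\<lambda>j. state 1 (pn v j)) [0..<degree adj v]"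
  define bits where "bits = list_decode (state 0 v)"
  have len: "length bits = degree adj v" unfolding bits_def decode_run_0 by simp
  have port: "bits ! j = 1 \<and> view_inner \<Delta> (nbr_states ! j)
        \<and> view_in_heavy (fst (prod_decode (nbr_states ! j)))
      \<longleftrightarrow> ori v (pn v j) \<and> inner (pn v j) \<and> in_heavy (pn v j)"
    if j: "j < degree adj v" for j
  proof -
    have "pn v j \<in> V" using j ports[OF vV] adjV unfolding bij_betw_def by blast
    moreover have "nbr_states ! j = state 1 (pn v j)" unfolding nbr_states_def using j by simp
    moreover have "bits ! j = 1 \<longleftrightarrow> ori v (pn v j)"
      unfolding bits_def decode_run_0 using j by (simp add: bit_def)
    ultimately show ?thesis
      using view_inner_state_1 view_in_heavy_state_0 fst_decode_state_1 by simp
  qed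
  have "(\<exists>j<length bits. bits ! j = 1 \<and> view_inner \<Delta> (nbr_states ! j)
        \<and> view_in_heavy (fst (prod_decode (nbr_states ! j))))
      \<longleftrightarrow> (\<exists>j<degree adj v. ori v (pn v j) \<and> inner (pn v j) \<and> in_heavy (pn v j))"
    using len port by auto
  also have "\<dots> \<longleftrightarrow> (\<exists>u. adj v u \<and> ori v u \<and> inner u \<and> in_heavy u)"
    by (rule ex_port[OF vV])
  finally have out_edge: "(\<exists>j<length bits. bits ! j = 1 \<and> view_inner \<Delta> (nbr_states ! j)
        \<and> view_in_heavy (fst (prod_decode (nbr_states ! j))))
      \<longleftrightarrow> (\<exists>u. adj v u \<and> ori v u \<and> inner u \<and> in_heavy u)" .
  have "view_keep \<Delta> (state 2 v) \<longleftrightarrow> \<not> (view_full \<Delta> (state 0 v) \<and>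
      (\<not> view_inner \<Delta> (state 1 v) \<or> (view_out_heavy (state 0 v) \<and>
        (\<exists>j<length bits. bits ! j = 1 \<and> view_inner \<Delta> (nbr_states ! j)
          \<and> view_in_heavy (fst (prod_decode (nbr_states ! j)))))))"
    unfolding view_keep_def Let_def numeral_2_eq_2 decode_run_Suc fst_conv snd_conv
      list_encode_inverse fst_decode_state_1[unfolded One_nat_def] nbr_states_def bits_def
      One_nat_def ..
  then show ?thesis unfolding out_edge view_full_state_0 view_out_heavy_state_0[OF vV]
      view_inner_state_1[OF vV] removed_def using vV by auto
qed

lemma gather_alg_output: "alg_output (gather_alg \<Delta>) V adj pn ori = V - removed"
  unfolding alg_output_def using view_keep_state_2 by (auto simp: gather_alg_def)

end

lemma valid_instance_port_numbered_graph:
  assumes "valid_instance V adj pn ori" "\<forall>v\<in>V. degree adj v \<le> \<Delta>" "odd \<Delta>"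
  shows "port_numbered_graph V adj ori \<Delta> pn"
  using assms unfolding valid_instance_def by unfold_locales blast+

theorem theorem8:
  fixes \<Delta> :: nat
  assumes "odd \<Delta>"
  shows "\<exists>A :: (nat, nat) local_alg.
    \<forall>(V :: nat set) adj pn ori.
      valid_instance V adj pn ori \<and> (\<forall>v\<in>V. \<exists>u. adj v u) \<and> (\<forall>v\<in>V. degree adj v \<le> \<Delta>) \<longrightarrow>
      dominating_set V adj (alg_output A V adj pn ori) \<and>
      (\<forall>Ds. min_dominating_set V adj Ds \<longrightarrow> card (alg_output A V adj pn ori) \<le> \<Delta> * card Ds)"
proof (intro exI[of _ "gather_alg \<Delta>"] allI impI)
  fix V :: "nat set" and adj pn ori
  assume "valid_instance V adj pn ori \<and> (\<forall>v\<in>V. \<exists>u. adj v u) \<and> (\<forall>v\<in>V. degree adj v \<le> \<Delta>)"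
  then interpret port_numbered_graph V adj ori \<Delta> pn
    using valid_instance_port_numbered_graph assms by blast
  show "dominating_set V adj (alg_output (gather_alg \<Delta>) V adj pn ori) \<and>
      (\<forall>Ds. min_dominating_set V adj Ds \<longrightarrow> card (alg_output (gather_alg \<Delta>) V adj pn ori) \<le> \<Delta> * card Ds)"
    unfolding gather_alg_output min_dominating_set_def using kept_dominating card_kept_le by blast
qed

end
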